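(* There exists a family of nonnegative constants $(m^\epsilon(j))_{\epsilon>0,\,j\in\mathbb{N}}$ such that: (1) for all sufficiently small $\epsilon>0$ and every $j\in\mathbb{N}$, one has $\tau_i^\epsilon(x)<m^\epsilon(j)$ for every $i\in\{0,1\}$ and every $x\in V_{1-i}^\epsilon(j)$; (2) $\lim_{\epsilon\downarrow0}\sum_{j=1}^\infty j\,e^{\nu j}m^\epsilon(j)=0$ for every $\nu\in[0,\alpha)$.
   Context: Fix $\alpha>\beta>0$. For $i\in\{0,1\}$ let $\Phi_i^t(x)=(i+(x_1-i)e^{-\alpha t},i+(x_2-i)e^{-\beta t})$ and $\Psi_i^t=\Phi_i^{-t}$. Let $\Gamma=\{(x_1,x_2):0\le x_2\le1,\ x_2^{\alpha/\beta}\le x_1\le1-(1-x_2)^{\alpha/\beta}\}$, $\Gamma^\circ$ its interior, and $D(x)=\alpha\beta(x_1-x_2)$. For $\epsilon>0$, $i\in\{0,1\}$ and $x\in\Gamma^\circ$ with $|D(x)|<\epsilon$, let $\tau_i^\epsilon(x)=\min\big(\sup\{t\ge0:|D(\Psi_i^tx)|<\epsilon\},\ \sup\{t\ge0:\Psi_i^t(x)\in\Gamma^\circ\}\big)$. For integers $j\ge2$ let $V_i^\epsilon(j)=\{x\in\Gamma^\circ:|D(x)|<\epsilon,\ \tau_i^\epsilon(x)\in(j-1,j]\}$, and let $V_i^\epsilon(1)=\{x\in\Gamma^\circ:|D(x)|<\epsilon,\ \tau_i^\epsilon(x)\in(\epsilon^{\beta/\alpha},1]\}$. Here $\mathbb{N}=\{1,2,\dots\}$.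 *)

theory Defs
  imports "HOL-Analysis.Analysis"
begin

definition Phi :: "real \<Rightarrow> real \<Rightarrow> nat \<Rightarrow> real \<Rightarrow> real \<times> real \<Rightarrow> real \<times> real" where
  "Phi \<alpha> \<beta> i t x = (real i + (fst x - real i) * exp (- \<alpha> * t),
                       real i + (snd x - real i) * exp (- \<beta> * t))"

definition Psi :: "real \<Rightarrow> real \<Rightarrow> nat \<Rightarrow> real \<Rightarrow> real \<times> real \<Rightarrow> real \<times> real" where
  "Psi \<alpha> \<beta> i t x = Phi \<alpha> \<beta> i (- t) x"

definition Gamma :: "real \<Rightarrow> real \<Rightarrow> (real \<times> real) set" where
  "Gamma \<alpha> \<beta> = {(x1, x2). 0 \<le> x2 \<and> x2 \<le> 1 \<and> x2 powr (\<alpha> / \<beta>) \<le> x1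
                        \<and> x1 \<le> 1 - (1 - x2) powr (\<alpha> / \<beta>)}"

definition Dfun :: "real \<Rightarrow> real \<Rightarrow> real \<times> real \<Rightarrow> real" where
  "Dfun \<alpha> \<beta> x = \<alpha> * \<beta> * (fst x - snd x)"

definition tau :: "real \<Rightarrow> real \<Rightarrow> real \<Rightarrow> nat \<Rightarrow> real \<times> real \<Rightarrow> real" where
  "tau \<alpha> \<beta> \<epsilon> i x =
     min (Sup {t. t \<ge> 0 \<and> \<bar>Dfun \<alpha> \<beta> (Psi \<alpha> \<beta> i t x)\<bar> < \<epsilon>})
         (Sup {t. t \<ge> 0 \<and> Psi \<alpha> \<beta> i t x \<in> interior (Gamma \<alpha> \<beta>)})"

definition V :: "real \<Rightarrow> real \<Rightarrow> real \<Rightarrow> nat \<Rightarrow> nat \<Rightarrow> (real \<times> real) set" where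
  "V \<alpha> \<beta> \<epsilon> i j =
     {x \<in> interior (Gamma \<alpha> \<beta>). \<bar>Dfun \<alpha> \<beta> x\<bar> < \<epsilon> \<and>
        (if j = 1 then \<epsilon> powr (\<beta> / \<alpha>) < tau \<alpha> \<beta> \<epsilon> i x \<and> tau \<alpha> \<beta> \<epsilon> i x \<le> 1
         else real j - 1 < tau \<alpha> \<beta> \<epsilon> i x \<and> tau \<alpha> \<beta> \<epsilon> i x \<le> real j)}"

end

theory Submission
  imports Defs "HOL-Real_Asymp.Real_Asymp"
begin

(* Measured from the fixed point i, the backward flow \<Psi>_i stretches the first coordinate by
   e^{\<alpha> t} and the second by e^{\<beta> t}. Since \<alpha> > \<beta>, a point with |D| < \<epsilon> can only stay
   in the strip |D| < \<epsilon> for a time of order \<epsilon> / a, where a = |x1 - i|, and can only stay in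
   \<Gamma> for a time of order (1 - a) / a. If x \<in> V_{1-i}(j), then x stayed in \<Gamma> under \<Psi>_{1-i}
   for a time longer than T = j - 1 (resp. \<epsilon>^{\<beta>/\<alpha>}), which forces 1 - a < e^{-\<alpha> T}.
   Hence \<tau>_i(x) is bounded by min(\<epsilon>, e^{-\<alpha> j}) up to constants for j \<ge> 2, and by
   \<epsilon>^{1-\<beta>/\<alpha>} up to constants for j = 1; these bounds are summable against j e^{\<nu> j} for
   \<nu> < \<alpha> and vanish termwise, so Tannery's theorem gives the limit. *)

lemma exp_separation_time_bound:
  fixes \<alpha> \<beta> \<delta> a b t :: real
  assumes "0 \<le> \<beta>" "\<beta> < \<alpha>" "0 \<le> t" "\<bar>a - b\<bar> < \<delta>"
    and "\<bar>a * exp (\<alpha> * t) - b * exp (\<beta> * t)\<bar> < \<delta>"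
  shows "(\<alpha> - \<beta>) * \<bar>a\<bar> * t < 2 * \<delta>"
proof -
  have nonneg_case: "(\<alpha> - \<beta>) * a * t < 2 * \<delta>"
    if "0 \<le> a" "\<bar>a - b\<bar> < \<delta>" "\<bar>a * exp (\<alpha> * t) - b * exp (\<beta> * t)\<bar> < \<delta>" for a b
  proof (rule ccontr)
    assume "\<not> (\<alpha> - \<beta>) * a * t < 2 * \<delta>"
    moreover have "(\<alpha> - \<beta>) * t \<le> exp ((\<alpha> - \<beta>) * t) - 1"
      using exp_ge_add_one_self[of "(\<alpha> - \<beta>) * t"] by linarith
    then have "a * ((\<alpha> - \<beta>) * t) \<le> a * (exp ((\<alpha> - \<beta>) * t) - 1)"
      using \<open>0 \<le> a\<close> by (rule mult_left_mono)
    ultimately have gap: "\<delta> \<le> a * (exp ((\<alpha> - \<beta>) * t) - 1) + (a - b)"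
      using that(2) by (simp add: algebra_simps)
    have "0 \<le> a * (exp ((\<alpha> - \<beta>) * t) - 1) + (a - b)"
      using gap that(2) abs_ge_zero[of "a - b"] by linarith
    moreover have "1 \<le> exp (\<beta> * t)"
      using assms(1,3) by simp
    ultimately have "\<delta> \<le> exp (\<beta> * t) * (a * (exp ((\<alpha> - \<beta>) * t) - 1) + (a - b))"
      using gap mult_right_mono[of 1 "exp (\<beta> * t)"] by fastforce
    also have "\<dots> = a * exp (\<alpha> * t) - b * exp (\<beta> * t)"
      by (simp add: algebra_simps flip: exp_add)
    finally show False
      using that(3) by linarith
  qed
  show ?thesis
  proof (cases "0 \<le> a")
    case True
    then show ?thesis
      using nonneg_case[OF True assms(4,5)] by simp
  next
    case False
    have "(\<alpha> - \<beta>) * (- a) * t < 2 * \<delta>"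
      by (rule nonneg_case[of "- a" "- b"])
        (use False assms(4,5) in \<open>auto simp: abs_minus_commute algebra_simps\<close>)
    with False show ?thesis
      by simp
  qed
qed

lemma exp_growth_time_bound:
  fixes \<alpha> a t :: real
  assumes "0 \<le> a" "a * exp (\<alpha> * t) \<le> 1"
  shows "\<alpha> * a * t \<le> 1 - a"
proof -
  have "a * (1 + \<alpha> * t) \<le> a * exp (\<alpha> * t)"
    using assms(1) exp_ge_add_one_self[of "\<alpha> * t"] by (rule mult_left_mono[rotated])
  with assms(2) show ?thesis
    by (simp add: algebra_simps)
qed

lemma mult_Sup_le:
  fixes S :: "real set"
  assumes "S \<noteq> {}" "0 \<le> a" "\<And>s. s \<in> S \<Longrightarrow> a * s \<le> c"
  shows "a * Sup S \<le> c"
proof (cases "a = 0")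
  case True
  with assms(1,3) show ?thesis
    by force
next
  case False
  with assms(2) have "0 < a"
    by simp
  have "Sup S \<le> c / a"
    using assms(1,3) \<open>0 < a\<close> by (intro cSup_least) (auto simp: pos_le_divide_eq mult.commute)
  with \<open>0 < a\<close> show ?thesis
    by (simp add: pos_le_divide_eq mult.commute)
qed

lemma fst_Psi: "fst (Psi \<alpha> \<beta> i t x) - real i = (fst x - real i) * exp (\<alpha> * t)"
  by (simp add: Psi_def Phi_def)

lemma Dfun_Psi:
  "Dfun \<alpha> \<beta> (Psi \<alpha> \<beta> i t x) =
     \<alpha> * \<beta> * ((fst x - real i) * exp (\<alpha> * t) - (snd x - real i) * exp (\<beta> * t))"
  by (simp add: Dfun_def Psi_def Phi_def algebra_simps)

lemma Psi_0 [simp]: "Psi \<alpha> \<beta> i 0 x = x"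
  by (simp add: Psi_def Phi_def)

lemma fst_interior_Gamma:
  assumes "y \<in> interior (Gamma \<alpha> \<beta>)"
  shows "0 \<le> fst y \<and> fst y \<le> 1"
proof -
  have "y \<in> Gamma \<alpha> \<beta>"
    using assms interior_subset by blast
  then have "snd y powr (\<alpha> / \<beta>) \<le> fst y" "fst y \<le> 1 - (1 - snd y) powr (\<alpha> / \<beta>)"
    by (auto simp: Gamma_def split_beta)
  moreover have "0 \<le> snd y powr (\<alpha> / \<beta>)" "0 \<le> (1 - snd y) powr (\<alpha> / \<beta>)"
    by auto
  ultimately show ?thesis
    by linarith
qed

lemma abs_diff_index:
  fixes s :: real
  assumes "i \<in> {0, 1}" "0 \<le> s" "s \<le> 1"
  shows "\<bar>s - real i\<bar> \<le> 1" and "\<bar>s - real (1 - i)\<bar> = 1 - \<bar>s - real i\<bar>"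
  using assms by auto

lemma escape_gap:
  assumes "0 < \<alpha>" "i \<in> {0, 1}" "x \<in> interior (Gamma \<alpha> \<beta>)" "T < tau \<alpha> \<beta> \<epsilon> (1 - i) x"
  shows "1 - exp (- \<alpha> * T) < \<bar>fst x - real i\<bar>"
proof -
  let ?B = "{t. t \<ge> 0 \<and> Psi \<alpha> \<beta> (1 - i) t x \<in> interior (Gamma \<alpha> \<beta>)}"
  have "0 \<in> ?B"
    using assms(3) by simp
  moreover have "T < Sup ?B"
    using assms(4) by (simp add: tau_def)
  ultimately have "\<exists>t \<in> ?B. T < t"
    by (intro less_cSupD) auto
  then obtain t where t: "t \<in> ?B" "T < t"
    by blast
  have x1: "0 \<le> fst x" "fst x \<le> 1"
    using fst_interior_Gamma[OF assms(3)] by auto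
  have "1 - i \<in> {0, 1}"
    using assms(2) by auto
  moreover have "0 \<le> fst (Psi \<alpha> \<beta> (1 - i) t x) \<and> fst (Psi \<alpha> \<beta> (1 - i) t x) \<le> 1"
    by (rule fst_interior_Gamma[of _ \<alpha> \<beta>]) (use t(1) in simp)
  ultimately have "\<bar>fst (Psi \<alpha> \<beta> (1 - i) t x) - real (1 - i)\<bar> \<le> 1"
    by (intro abs_diff_index(1)) auto
  then have "\<bar>fst x - real (1 - i)\<bar> * exp (\<alpha> * t) \<le> 1"
    by (simp only: fst_Psi abs_mult abs_exp_cancel)
  then have "\<bar>fst x - real (1 - i)\<bar> * exp (\<alpha> * t) * exp (- \<alpha> * t) \<le> 1 * exp (- \<alpha> * t)"
    by (rule mult_right_mono) simp
  then have "\<bar>fst x - real (1 - i)\<bar> \<le> exp (- \<alpha> * t)"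
    by (simp add: mult.assoc flip: exp_add)
  also have "\<dots> < exp (- \<alpha> * T)"
    using assms(1) t(2) by simp
  finally show ?thesis
    using abs_diff_index(2)[OF assms(2) x1] by simp
qed

lemma gap_mult_tau_le:
  assumes "0 < \<beta>" "\<beta> < \<alpha>" "i \<in> {0, 1}" "x \<in> interior (Gamma \<alpha> \<beta>)" "\<bar>Dfun \<alpha> \<beta> x\<bar> < \<epsilon>"
  shows "\<bar>fst x - real i\<bar> * tau \<alpha> \<beta> \<epsilon> i x \<le> 2 * \<epsilon> / (\<alpha> * \<beta> * (\<alpha> - \<beta>))"
    and "\<alpha> * (\<bar>fst x - real i\<bar> * tau \<alpha> \<beta> \<epsilon> i x) \<le> 1 - \<bar>fst x - real i\<bar>"
proof -
  let ?a = "\<bar>fst x - real i\<bar>"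
  let ?A = "{t. t \<ge> 0 \<and> \<bar>Dfun \<alpha> \<beta> (Psi \<alpha> \<beta> i t x)\<bar> < \<epsilon>}"
  let ?B = "{t. t \<ge> 0 \<and> Psi \<alpha> \<beta> i t x \<in> interior (Gamma \<alpha> \<beta>)}"
  have tau: "tau \<alpha> \<beta> \<epsilon> i x = min (Sup ?A) (Sup ?B)"
    by (simp add: tau_def)
  have "0 \<in> ?A" "0 \<in> ?B"
    using assms(4,5) by auto
  have "?a * Sup ?A \<le> 2 * \<epsilon> / (\<alpha> * \<beta> * (\<alpha> - \<beta>))"
  proof (rule mult_Sup_le)
    fix s assume s: "s \<in> ?A"
    have pos: "0 < \<alpha>" "0 < \<beta>" "0 < \<alpha> * \<beta>" "0 < \<alpha> - \<beta>"
      using assms(1,2) by auto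
    have "\<bar>(fst x - real i) - (snd x - real i)\<bar> < \<epsilon> / (\<alpha> * \<beta>)"
      using assms(5) pos by (simp add: Dfun_def abs_mult pos_less_divide_eq mult.commute)
    moreover have "\<bar>(fst x - real i) * exp (\<alpha> * s) - (snd x - real i) * exp (\<beta> * s)\<bar>
        < \<epsilon> / (\<alpha> * \<beta>)"
      using s pos by (simp add: Dfun_Psi abs_mult pos_less_divide_eq mult.commute)
    ultimately have "(\<alpha> - \<beta>) * ?a * s < 2 * (\<epsilon> / (\<alpha> * \<beta>))"
      using s pos by (intro exp_separation_time_bound) auto
    with pos show "?a * s \<le> 2 * \<epsilon> / (\<alpha> * \<beta> * (\<alpha> - \<beta>))"
      by (simp add: field_simps)
  qed (use \<open>0 \<in> ?A\<close> in auto)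
  moreover have "?a * tau \<alpha> \<beta> \<epsilon> i x \<le> ?a * Sup ?A"
    unfolding tau by (intro mult_left_mono) auto
  ultimately show "?a * tau \<alpha> \<beta> \<epsilon> i x \<le> 2 * \<epsilon> / (\<alpha> * \<beta> * (\<alpha> - \<beta>))"
    by linarith
  have "?a * Sup ?B \<le> (1 - ?a) / \<alpha>"
  proof (rule mult_Sup_le)
    fix s assume "s \<in> ?B"
    then have "0 \<le> fst (Psi \<alpha> \<beta> i s x) \<and> fst (Psi \<alpha> \<beta> i s x) \<le> 1"
      by (intro fst_interior_Gamma[of _ \<alpha> \<beta>]) simp
    then have "\<bar>fst (Psi \<alpha> \<beta> i s x) - real i\<bar> \<le> 1"
      by (intro abs_diff_index(1)[OF assms(3)]) auto
    then have "?a * exp (\<alpha> * s) \<le> 1"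
      by (simp only: fst_Psi abs_mult abs_exp_cancel)
    then have "\<alpha> * ?a * s \<le> 1 - ?a"
      by (intro exp_growth_time_bound) auto
    with assms(1,2) show "?a * s \<le> (1 - ?a) / \<alpha>"
      by (simp add: pos_le_divide_eq mult_ac)
  qed (use \<open>0 \<in> ?B\<close> in auto)
  moreover have "?a * tau \<alpha> \<beta> \<epsilon> i x \<le> ?a * Sup ?B"
    unfolding tau by (intro mult_left_mono) auto
  ultimately have "?a * tau \<alpha> \<beta> \<epsilon> i x \<le> (1 - ?a) / \<alpha>"
    by linarith
  with assms(1,2) show "\<alpha> * (?a * tau \<alpha> \<beta> \<epsilon> i x) \<le> 1 - ?a"
    by (simp add: pos_le_divide_eq mult.commute)
qed

definition escape_bound :: "real \<Rightarrow> real \<Rightarrow> real \<Rightarrow> real \<Rightarrow> real" where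
  "escape_bound \<alpha> \<beta> \<epsilon> T =
     min (2 * \<epsilon> / (\<alpha> * \<beta> * (\<alpha> - \<beta>) * (1 - exp (- \<alpha> * T))))
         (exp (- \<alpha> * T) / (\<alpha> * (1 - exp (- \<alpha> * T))))"

lemma escape_bound_pos:
  assumes "0 < \<beta>" "\<beta> < \<alpha>" "0 < \<epsilon>" "0 < T"
  shows "0 < escape_bound \<alpha> \<beta> \<epsilon> T"
  using assms by (simp add: escape_bound_def)

lemma escape_bound_le:
  assumes "0 < \<alpha>" "1 \<le> T"
  shows "escape_bound \<alpha> \<beta> \<epsilon> T \<le> exp (- \<alpha> * T) / (\<alpha> * (1 - exp (- \<alpha>)))"
proof -
  have "exp (- \<alpha> * T) \<le> exp (- \<alpha>)"
    using assms by simp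
  then have "\<alpha> * (1 - exp (- \<alpha>)) \<le> \<alpha> * (1 - exp (- \<alpha> * T))"
    using assms(1) by (intro mult_left_mono) auto
  moreover have "0 < \<alpha> * (1 - exp (- \<alpha>))"
    using assms(1) by simp
  ultimately have "exp (- \<alpha> * T) / (\<alpha> * (1 - exp (- \<alpha> * T))) \<le> exp (- \<alpha> * T) / (\<alpha> * (1 - exp (- \<alpha>)))"
    by (intro divide_left_mono) auto
  then show ?thesis
    unfolding escape_bound_def by linarith
qed

lemma tau_le_escape_bound:
  assumes "0 < \<beta>" "\<beta> < \<alpha>" "i \<in> {0, 1}" "x \<in> interior (Gamma \<alpha> \<beta>)" "\<bar>Dfun \<alpha> \<beta> x\<bar> < \<epsilon>"
    and "0 < T" "T < tau \<alpha> \<beta> \<epsilon> (1 - i) x"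
  shows "tau \<alpha> \<beta> \<epsilon> i x \<le> escape_bound \<alpha> \<beta> \<epsilon> T"
proof -
  let ?a = "\<bar>fst x - real i\<bar>" and ?L = "1 - exp (- \<alpha> * T)" and ?C = "\<alpha> * \<beta> * (\<alpha> - \<beta>)"
  have pos: "0 < \<alpha>" "0 < ?C" "0 < ?L"
    using assms(1,2,6) by auto
  have "?L < ?a"
    using escape_gap[OF pos(1) assms(3,4,7)] .
  with pos have "0 < ?a"
    by linarith
  have "0 \<le> \<epsilon>"
    using assms(5) by linarith
  have "tau \<alpha> \<beta> \<epsilon> i x * ?a \<le> 2 * \<epsilon> / ?C"
    using gap_mult_tau_le(1)[OF assms(1-5)] by (simp add: mult.commute)
  then have "tau \<alpha> \<beta> \<epsilon> i x \<le> 2 * \<epsilon> / ?C / ?a"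
    using \<open>0 < ?a\<close> by (simp only: pos_le_divide_eq)
  also have "\<dots> \<le> 2 * \<epsilon> / ?C / ?L"
    using pos \<open>?L < ?a\<close> \<open>0 < ?a\<close> \<open>0 \<le> \<epsilon>\<close> by (intro divide_left_mono mult_pos_pos) auto
  finally have first: "tau \<alpha> \<beta> \<epsilon> i x \<le> 2 * \<epsilon> / (?C * ?L)"
    by simp
  have "tau \<alpha> \<beta> \<epsilon> i x * (\<alpha> * ?a) \<le> 1 - ?a"
    using gap_mult_tau_le(2)[OF assms(1-5)] by (simp add: mult_ac)
  then have "tau \<alpha> \<beta> \<epsilon> i x \<le> (1 - ?a) / (\<alpha> * ?a)"
    using pos(1) \<open>0 < ?a\<close> by (simp only: pos_le_divide_eq mult_pos_pos)
  also have "\<dots> \<le> exp (- \<alpha> * T) / (\<alpha> * ?L)"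
    using pos \<open>?L < ?a\<close> by (intro frac_le) auto
  finally show ?thesis
    using first by (simp add: escape_bound_def)
qed

(* The escape bound taken at the left end of the window of \<tau>_{1-i} that defines V(j);
   the factor 2 makes the bound strict. *)

definition tau_majorant :: "real \<Rightarrow> real \<Rightarrow> real \<Rightarrow> nat \<Rightarrow> real" where
  "tau_majorant \<alpha> \<beta> \<epsilon> j = 2 * escape_bound \<alpha> \<beta> \<epsilon> (if j = 1 then \<epsilon> powr (\<beta> / \<alpha>) else real j - 1)"

lemma tau_majorant_pos:
  assumes "0 < \<beta>" "\<beta> < \<alpha>" "0 < \<epsilon>" "1 \<le> j"
  shows "0 < tau_majorant \<alpha> \<beta> \<epsilon> j"
  using assms by (auto simp: tau_majorant_def intro: escape_bound_pos)

lemma tau_lt_tau_majorant: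
  assumes "0 < \<beta>" "\<beta> < \<alpha>" "0 < \<epsilon>" "1 \<le> j" "i \<in> {0, 1}" "x \<in> V \<alpha> \<beta> \<epsilon> (1 - i) j"
  shows "tau \<alpha> \<beta> \<epsilon> i x < tau_majorant \<alpha> \<beta> \<epsilon> j"
proof -
  define T where "T = (if j = 1 then \<epsilon> powr (\<beta> / \<alpha>) else real j - 1)"
  have x: "x \<in> interior (Gamma \<alpha> \<beta>)" "\<bar>Dfun \<alpha> \<beta> x\<bar> < \<epsilon>" "T < tau \<alpha> \<beta> \<epsilon> (1 - i) x"
    using assms(6) by (auto simp: V_def T_def split: if_splits)
  have "0 < T"
    using assms(3,4) by (simp add: T_def)
  have "tau \<alpha> \<beta> \<epsilon> i x \<le> escape_bound \<alpha> \<beta> \<epsilon> T"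
    by (rule tau_le_escape_bound[OF assms(1,2,5) x(1,2) \<open>0 < T\<close> x(3)])
  also have "\<dots> < 2 * escape_bound \<alpha> \<beta> \<epsilon> T"
    using escape_bound_pos[OF assms(1-3) \<open>0 < T\<close>] by simp
  finally show ?thesis
    by (simp add: tau_majorant_def T_def)
qed

lemma tau_majorant_tendsto_zero:
  assumes "0 < \<beta>" "\<beta> < \<alpha>" "1 \<le> j"
  shows "((\<lambda>\<epsilon>. tau_majorant \<alpha> \<beta> \<epsilon> j) \<longlongrightarrow> 0) (at_right 0)"
proof (cases "j = 1")
  case True
  have "0 < \<beta> / \<alpha>" "\<beta> / \<alpha> < 1" "0 < \<alpha> * \<beta> * (\<alpha> - \<beta>)"
    using assms by auto
  then show ?thesis
    unfolding True tau_majorant_def escape_bound_def using assms by simp real_asymp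
next
  case False
  let ?T = "real j - 1"
  have "0 < ?T"
    using assms(3) False by simp
  have "0 < exp (- \<alpha> * ?T) / (\<alpha> * (1 - exp (- \<alpha> * ?T)))"
    using assms False by simp
  moreover have "((\<lambda>\<epsilon>. 2 * escape_bound \<alpha> \<beta> \<epsilon> ?T) \<longlongrightarrow>
      2 * min (2 * 0 / (\<alpha> * \<beta> * (\<alpha> - \<beta>) * (1 - exp (- \<alpha> * ?T))))
              (exp (- \<alpha> * ?T) / (\<alpha> * (1 - exp (- \<alpha> * ?T))))) (at_right 0)"
    unfolding escape_bound_def using assms \<open>0 < ?T\<close> by (intro tendsto_intros) auto
  ultimately show ?thesis
    using False by (simp add: tau_majorant_def)
qed

lemma summable_of_nat_mult_power:
  fixes q :: real
  assumes "\<bar>q\<bar> < 1"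
  shows "summable (\<lambda>n. real n * q ^ n)"
proof -
  have "summable (\<lambda>n. diffs (\<lambda>_. 1) n * \<bar>q\<bar> ^ n)"
    using assms by (intro termdiff_converges[of _ 1]) (auto intro: summable_geometric)
  then have "summable (\<lambda>n. real (Suc n) * \<bar>q\<bar> ^ n)"
    by (simp add: diffs_def)
  then show ?thesis
    by (rule summable_comparison_test[rotated])
      (auto intro!: exI[of _ 0] mult_right_mono simp: abs_mult power_abs)
qed

lemma weighted_tau_majorant_sum_tendsto_zero:
  assumes "0 < \<beta>" "\<beta> < \<alpha>" "0 \<le> \<nu>" "\<nu> < \<alpha>"
  shows "(\<forall>\<^sub>F \<epsilon> in at_right 0. summable (\<lambda>j. real j * exp (\<nu> * real j) * tau_majorant \<alpha> \<beta> \<epsilon> j)) \<and>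
    ((\<lambda>\<epsilon>. \<Sum>j. real j * exp (\<nu> * real j) * tau_majorant \<alpha> \<beta> \<epsilon> j) \<longlongrightarrow> 0) (at_right 0)"
proof -
  define a where "a j \<epsilon> = real j * exp (\<nu> * real j) * tau_majorant \<alpha> \<beta> \<epsilon> j" for j \<epsilon>
  define K where "K = 2 * exp \<alpha> / (\<alpha> * (1 - exp (- \<alpha>)))"
  have "0 < \<alpha>"
    using assms(1,2) by simp
  have limit: "((\<lambda>\<epsilon>. a j \<epsilon>) \<longlongrightarrow> 0) (at_right 0)" for j
  proof (cases "j = 0")
    case False
    then show ?thesis
      unfolding a_def using tau_majorant_tendsto_zero[OF assms(1,2), of j]
      by (intro tendsto_mult_right_zero) simp
  qed (simp add: a_def)
  have bound: "\<bar>a j \<epsilon>\<bar> \<le> K * (real j * exp (\<nu> - \<alpha>) ^ j)" if "2 \<le> j" "0 < \<epsilon>" for j \<epsilon>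
  proof -
    have "escape_bound \<alpha> \<beta> \<epsilon> (real j - 1) \<le> exp (- \<alpha> * (real j - 1)) / (\<alpha> * (1 - exp (- \<alpha>)))"
      using that(1) by (intro escape_bound_le[OF \<open>0 < \<alpha>\<close>]) simp
    then have "tau_majorant \<alpha> \<beta> \<epsilon> j \<le> 2 * (exp (- \<alpha> * (real j - 1)) / (\<alpha> * (1 - exp (- \<alpha>))))"
      using that(1) by (simp add: tau_majorant_def)
    also have "exp (- \<alpha> * (real j - 1)) = exp \<alpha> * exp (- \<alpha> * real j)"
      by (simp add: algebra_simps flip: exp_add)
    also have "2 * (exp \<alpha> * exp (- \<alpha> * real j) / (\<alpha> * (1 - exp (- \<alpha>)))) = K * exp (- \<alpha> * real j)"
      by (simp add: K_def)
    finally have "exp (\<nu> * real j) * tau_majorant \<alpha> \<beta> \<epsilon> j \<le> K * (exp (\<nu> * real j) * exp (- \<alpha> * real j))"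
      by (simp add: mult_left_mono mult.left_commute)
    also have "exp (\<nu> * real j) * exp (- \<alpha> * real j) = exp (\<nu> - \<alpha>) ^ j"
      by (simp flip: exp_add exp_of_nat_mult add: algebra_simps)
    finally have "exp (\<nu> * real j) * tau_majorant \<alpha> \<beta> \<epsilon> j \<le> K * exp (\<nu> - \<alpha>) ^ j" .
    then have "real j * (exp (\<nu> * real j) * tau_majorant \<alpha> \<beta> \<epsilon> j) \<le> real j * (K * exp (\<nu> - \<alpha>) ^ j)"
      by (rule mult_left_mono) simp
    moreover have "0 < tau_majorant \<alpha> \<beta> \<epsilon> j"
      using tau_majorant_pos[OF assms(1,2) that(2)] that(1) by simp
    ultimately show ?thesis
      by (simp add: a_def abs_mult mult_ac)
  qed
  have "\<forall>\<^sub>F (j, \<epsilon>) in at_top \<times>\<^sub>F at_right 0. norm (a j \<epsilon>) \<le> K * (real j * exp (\<nu> - \<alpha>) ^ j)"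
    using eventually_prodI[OF eventually_ge_at_top[of 2] eventually_at_right_less[of 0]]
    by eventually_elim (auto intro: bound)
  moreover have "summable (\<lambda>j. K * (real j * exp (\<nu> - \<alpha>) ^ j))"
    using assms(4) by (intro summable_mult summable_of_nat_mult_power) simp
  ultimately have summable_norm: "\<forall>\<^sub>F \<epsilon> in at_right 0. summable (\<lambda>j. norm (a j \<epsilon>))"
    and "((\<lambda>\<epsilon>. \<Sum>j. a j \<epsilon>) \<longlongrightarrow> 0) (at_right 0)"
    using tannerys_theorem[OF limit] by auto
  moreover from summable_norm have "\<forall>\<^sub>F \<epsilon> in at_right 0. summable (\<lambda>j. a j \<epsilon>)"
    by eventually_elim (rule summable_norm_cancel)
  ultimately show ?thesis
    unfolding a_def by simp
qed

theorem lemma7p10: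
  fixes \<alpha> \<beta> :: real
  assumes "\<alpha> > \<beta>" and "\<beta> > 0"
  shows "\<exists>m :: real \<Rightarrow> nat \<Rightarrow> real.
     (\<forall>\<epsilon>>0. \<forall>j\<ge>1. m \<epsilon> j \<ge> 0) \<and>
     (\<forall>\<^sub>F \<epsilon> in at_right 0. \<forall>j\<ge>1. \<forall>i\<in>{0,1}. \<forall>x\<in>V \<alpha> \<beta> \<epsilon> (1 - i) j.
         tau \<alpha> \<beta> \<epsilon> i x < m \<epsilon> j) \<and>
     (\<forall>\<nu>. 0 \<le> \<nu> \<and> \<nu> < \<alpha> \<longrightarrow>
        (\<forall>\<^sub>F \<epsilon> in at_right 0. summable (\<lambda>j. real j * exp (\<nu> * real j) * m \<epsilon> j)) \<and>
        ((\<lambda>\<epsilon>. \<Sum>j. real j * exp (\<nu> * real j) * m \<epsilon> j) \<longlongrightarrow> 0) (at_right 0))"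
proof (intro exI[of _ "tau_majorant \<alpha> \<beta>"] conjI allI impI)
  show "0 \<le> tau_majorant \<alpha> \<beta> \<epsilon> j" if "0 < \<epsilon>" "1 \<le> j" for \<epsilon> j
    using tau_majorant_pos[OF assms(2,1) that] by simp
  show "\<forall>\<^sub>F \<epsilon> in at_right 0. \<forall>j\<ge>1. \<forall>i\<in>{0,1}. \<forall>x\<in>V \<alpha> \<beta> \<epsilon> (1 - i) j.
      tau \<alpha> \<beta> \<epsilon> i x < tau_majorant \<alpha> \<beta> \<epsilon> j"
    using eventually_at_right_less[of 0] by eventually_elim (use assms tau_lt_tau_majorant in blast)
  fix \<nu> :: real
  assume "0 \<le> \<nu> \<and> \<nu> < \<alpha>"
  then show "\<forall>\<^sub>F \<epsilon> in at_right 0. summable (\<lambda>j. real j * exp (\<nu> * real j) * tau_majorant \<alpha> \<beta> \<epsilon> j)"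
    and "((\<lambda>\<epsilon>. \<Sum>j. real j * exp (\<nu> * real j) * tau_majorant \<alpha> \<beta> \<epsilon> j) \<longlongrightarrow> 0) (at_right 0)"
    using weighted_tau_majorant_sum_tendsto_zero[OF assms(2,1)] by auto
qed

end
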